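(* Assume $\theta_i<1$ for all $i$ and $\theta_j>0$ for some $j$. Suppose $\mathcal G(C)$ is a star topology with center node $l$ and $0<\theta_l<1$. Let $x^*$ be any equilibrium social power of systems (A) and (B). Then: (i) for any $i,j\in\mathcal V_f$, if $C_{li}>C_{lj}$ then $x^*_i>x^*_j$; (ii) for any $i\in\mathcal V_f$ and $j\in\mathcal V_p\setminus\{l\}$, if $C_{li}=C_{lj}$ then $x^*_i>x^*_j$; (iii) for any $i,j\in\mathcal V_p\setminus\{l\}$ with $C_{li}=C_{lj}$, $x^*_i>x^*_j$ if and only if $\theta_i<\theta_j$; (iv) for any $i,j\in\mathcal V_p\setminus\{l\}$ with $\theta_i=\theta_j$, $x^*_i>x^*_j$ if and only if $C_{li}>C_{lj}$.
   Context: Let $n\ge 2$, $\mathbf 1_n$ the all-ones vector, $I_n$ the identity matrix, $\Delta_n=\{x\in\mathbb R^n: x\ge 0,\ \mathbf 1_n^Tx=1\}$. Let $C\in\mathbb R^{n\times n}$ be a nonnegative row-stochastic matrix with zero diagonal, and $\mathcal G(C)$ the digraph on $\{1,\dots,n\}$ with an edge $(i,j)$ iff $C_{ij}>0$. $\mathcal G(C)$ is a star topology with center node $l$ if every edge of $\mathcal G(C)$ is either from $l$ or to $l$ (i.e. $C_{ij}>0$ implies $i=l$ or $j=l$). Let $\theta=(\theta_1,\dots,\theta_n)\in[0,1]^n$, $\Theta=\mathrm{diag}(\theta)$, $W(x)=\mathrm{diag}(x)+(I_n-\mathrm{diag}(x))C$. Let $\mathcal V_f=\{i:\theta_i=0\}$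 and $\mathcal V_p=\{i:\theta_i>0\}$. System (A): $x(s+1)=F(x(s))$, $x(0)\in\Delta_n$, where $F(x)=(I_n-\Theta)(I_n-W(x)^T\Theta)^{-1}\mathbf 1_n/n$; an equilibrium is $x^*\in\Delta_n$ with $F(x^* )=x^*$. System (B): $V(k+1)=\Theta W(x(k))V(k)+I_n-\Theta$, $x(k+1)=V(k+1)^T\mathbf 1_n/n$, with $V(0)=I_n$, $x(0)\in\Delta_n$; an equilibrium is a pair $(V^*,x^* )$ with $V^*$ row-stochastic, $x^*\in\Delta_n$, $V^*=\Theta W(x^* )V^*+I_n-\Theta$, $x^*=(V^* )^T\mathbf 1_n/n$. The equilibrium social powers of (A) and (B) coincide (the fixed points of $F$). *)

theory Defs
  imports "HOL-Analysis.Analysis"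
begin

definition diag_mat :: "real^'n \<Rightarrow> real^'n^'n" where
  "diag_mat x = (\<chi> i j. if i = j then x $ i else 0)"

definition ones_vec :: "real^'n" where
  "ones_vec = (\<chi> i. 1)"

definition prob_simplex :: "(real^'n) set" where
  "prob_simplex = {x. (\<forall>i. 0 \<le> x $ i) \<and> (\<Sum>i\<in>UNIV. x $ i) = 1}"

definition row_stochastic :: "real^'n^'n \<Rightarrow> bool" where
  "row_stochastic C \<longleftrightarrow> (\<forall>i j. 0 \<le> C $ i $ j) \<and> (\<forall>i. (\<Sum>j\<in>UNIV. C $ i $ j) = 1)"

definition zero_diag :: "real^'n^'n \<Rightarrow> bool" where
  "zero_diag C \<longleftrightarrow> (\<forall>i. C $ i $ i = 0)"

definition star_topology :: "real^'n^'n \<Rightarrow> 'n \<Rightarrow> bool" where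
  "star_topology C l \<longleftrightarrow> (\<forall>i j. C $ i $ j > 0 \<longrightarrow> i = l \<or> j = l)"

definition Wmat :: "real^'n^'n \<Rightarrow> real^'n \<Rightarrow> real^'n^'n" where
  "Wmat C x = diag_mat x + (mat 1 - diag_mat x) ** C"

definition Fmap :: "real^'n^'n \<Rightarrow> real^'n \<Rightarrow> real^'n \<Rightarrow> real^'n" where
  "Fmap C \<theta> x = (mat 1 - diag_mat \<theta>) *v
     (matrix_inv (mat 1 - transpose (Wmat C x) ** diag_mat \<theta>) *v
        ((1 / real CARD('n)) *\<^sub>R ones_vec))"

text \<open>Equilibrium social power of system (A) (equivalently of (B)).\<close>
definition equilibrium :: "real^'n^'n \<Rightarrow> real^'n \<Rightarrow> real^'n \<Rightarrow> bool" where
  "equilibrium C \<theta> x \<longleftrightarrow> x \<in> prob_simplex \<and> Fmap C \<theta> x = x"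

end

theory Submission imports Defs begin

text \<open>At an equilibrium, \<open>x = (I - \<Theta>) y\<close> where \<open>y\<close> solves
  \<open>(I - W(x)\<^sup>T \<Theta>) y = \<one>/n\<close>. Since \<open>W(x)\<close> is row-stochastic, the \<open>j\<close>-th column of
  \<open>W(x)\<^sup>T \<Theta>\<close> sums to \<open>\<theta>\<^sub>j < 1\<close>, which makes \<open>I - W(x)\<^sup>T \<Theta>\<close> invertible and
  \<open>y\<close> positive. In a star with center \<open>l\<close>, a non-center node \<open>i\<close> is influenced only by
  itself and by \<open>l\<close>, so its equation collapses to the scalar relation
  \<open>x\<^sub>i = (1 - \<theta>\<^sub>i) s\<^sub>i + \<theta>\<^sub>i x\<^sub>i\<^sup>2\<close> with \<open>s\<^sub>i = 1/n + C\<^sub>l\<^sub>i K\<close> and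
  \<open>K = (1 - x\<^sub>l) \<theta>\<^sub>l y\<^sub>l > 0\<close>. All four orderings are elementary consequences of this
  relation for \<open>0 < x\<^sub>i\<close> and \<open>x\<^sub>i + x\<^sub>j \<le> 1\<close>.\<close>

lemma subinvariant_nonneg_eq_0:
  fixes w :: "'n::finite \<Rightarrow> 'n \<Rightarrow> real" and t u :: "'n \<Rightarrow> real"
  assumes w_sum: "\<And>j. (\<Sum>i\<in>UNIV. w j i) = 1" and t_less_1: "\<And>j. t j < 1"
    and u_nonneg: "\<And>i. 0 \<le> u i" and u_le: "\<And>i. u i \<le> (\<Sum>j\<in>UNIV. w j i * t j * u j)"
  shows "u i = 0"
proof -
  have "(\<Sum>i\<in>UNIV. u i) \<le> (\<Sum>i\<in>UNIV. \<Sum>j\<in>UNIV. w j i * t j * u j)"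
    by (rule sum_mono) (rule u_le)
  also have "\<dots> = (\<Sum>j\<in>UNIV. t j * u j * (\<Sum>i\<in>UNIV. w j i))"
    by (subst sum.swap) (simp add: sum_distrib_left mult_ac)
  also have "\<dots> = (\<Sum>j\<in>UNIV. t j * u j)"
    by (simp add: w_sum)
  finally have "(\<Sum>j\<in>UNIV. (1 - t j) * u j) \<le> 0"
    by (simp add: algebra_simps sum_subtractf)
  moreover have nonneg: "\<And>j. 0 \<le> (1 - t j) * u j"
    using t_less_1 u_nonneg by (simp add: less_imp_le)
  ultimately have "(\<Sum>j\<in>UNIV. (1 - t j) * u j) = 0"
    by (meson antisym sum_nonneg)
  then have "(1 - t i) * u i = 0"
    using nonneg by (simp add: sum_nonneg_eq_0_iff)
  then show ?thesis
    using t_less_1[of i] by simp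
qed

lemma prob_simplex_pair_sum_le:
  assumes "x \<in> prob_simplex" "i \<noteq> j"
  shows "x $ i + x $ j \<le> 1"
proof -
  have "(\<Sum>k\<in>{i, j}. x $ k) \<le> (\<Sum>k\<in>UNIV. x $ k)"
    using assms(1) by (intro sum_mono2) (auto simp: prob_simplex_def)
  then show ?thesis
    using assms by (simp add: prob_simplex_def)
qed

lemma Wmat_nth:
  "Wmat C x $ j $ i = (if j = i then x $ j else 0) + (1 - x $ j) * C $ j $ i"
proof -
  have "((mat 1 - diag_mat x) ** C) $ j $ i = (\<Sum>k\<in>UNIV. (if j = k then 1 - x $ j else 0) * C $ k $ i)"
    by (simp add: matrix_matrix_mult_def mat_def diag_mat_def, intro sum.cong) auto
  also have "\<dots> = (1 - x $ j) * C $ j $ i"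
    by (simp add: if_distrib[of "\<lambda>a. a * _"] cong: if_cong)
  finally show ?thesis
    by (simp add: Wmat_def diag_mat_def)
qed

lemma row_stochastic_Wmat:
  assumes "row_stochastic C" "x \<in> prob_simplex"
  shows "row_stochastic (Wmat C x)"
proof -
  have "x $ j \<le> 1" for j
    using assms(2) member_le_sum[of j UNIV "\<lambda>i. x $ i"] by (auto simp: prob_simplex_def)
  moreover have "(\<Sum>i\<in>UNIV. (if j = i then x $ j else 0) + (1 - x $ j) * C $ j $ i) = 1" for j
    using assms(1) by (simp add: sum.distrib sum_distrib_left[symmetric] row_stochastic_def)
  ultimately show ?thesis
    using assms by (auto simp: row_stochastic_def prob_simplex_def Wmat_nth)
qed

lemma mat_minus_transpose_mult_diag_mult_nth:
  "((mat 1 - transpose W ** diag_mat \<theta>) *v v) $ i = v $ i - (\<Sum>j\<in>UNIV. W $ j $ i * \<theta> $ j * v $ j)"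
proof -
  have "(transpose W ** diag_mat \<theta>) $ i $ k = W $ k $ i * \<theta> $ k" for k
    by (simp add: matrix_matrix_mult_def transpose_def diag_mat_def if_distrib cong: if_cong)
  then have "((mat 1 - transpose W ** diag_mat \<theta>) *v v) $ i
      = (\<Sum>j\<in>UNIV. (if i = j then v $ j else 0) - W $ j $ i * \<theta> $ j * v $ j)"
    unfolding matrix_vector_mult_def by (simp add: mat_def, intro sum.cong) (auto simp: algebra_simps)
  then show ?thesis
    by (simp add: sum_subtractf)
qed

lemma invertible_mat_minus_transpose_mult_diag:
  assumes W: "row_stochastic W" and \<theta>: "\<And>j. 0 \<le> \<theta> $ j" "\<And>j. \<theta> $ j < 1"
  shows "invertible (mat 1 - transpose W ** diag_mat \<theta>)"
proof -
  have "v = 0" if "(mat 1 - transpose W ** diag_mat \<theta>) *v v = 0" for v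
  proof -
    have "\<bar>v $ i\<bar> \<le> (\<Sum>j\<in>UNIV. W $ j $ i * \<theta> $ j * \<bar>v $ j\<bar>)" for i
    proof -
      have "v $ i = (\<Sum>j\<in>UNIV. W $ j $ i * \<theta> $ j * v $ j)"
        using that mat_minus_transpose_mult_diag_mult_nth[of W \<theta> v i] by simp
      also have "\<bar>\<dots>\<bar> \<le> (\<Sum>j\<in>UNIV. \<bar>W $ j $ i * \<theta> $ j * v $ j\<bar>)"
        by (rule sum_abs)
      finally show ?thesis
        using W \<theta> by (simp add: abs_mult row_stochastic_def)
    qed
    then have "\<bar>v $ i\<bar> = 0" for i
        using W \<theta> by (intro subinvariant_nonneg_eq_0[where w = "\<lambda>j i. W $ j $ i"
          and t = "\<lambda>j. \<theta> $ j" and u = "\<lambda>i. \<bar>v $ i\<bar>"]) (auto simp: row_stochastic_def)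
    then show ?thesis
      by (simp add: vec_eq_iff)
  qed
  then show ?thesis
    unfolding invertible_left_inverse matrix_left_invertible_ker by blast
qed

text \<open>The negative part of \<open>y\<close> is subinvariant, hence zero.\<close>

lemma positive_solution_mat_minus_transpose_mult_diag:
  assumes W: "row_stochastic W" and \<theta>: "\<And>j. 0 \<le> \<theta> $ j" "\<And>j. \<theta> $ j < 1"
    and y: "\<And>i. y $ i = b i + (\<Sum>j\<in>UNIV. W $ j $ i * \<theta> $ j * y $ j)"
    and b: "\<And>i. 0 < b i"
  shows "0 < y $ i"
proof -
  have weight_nonneg: "0 \<le> W $ j $ i * \<theta> $ j" for i j
    using W \<theta> by (simp add: row_stochastic_def)
  have "max 0 (- y $ i) \<le> (\<Sum>j\<in>UNIV. W $ j $ i * \<theta> $ j * max 0 (- y $ j))" for i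
  proof -
    have "- (\<Sum>j\<in>UNIV. W $ j $ i * \<theta> $ j * y $ j) \<le> (\<Sum>j\<in>UNIV. W $ j $ i * \<theta> $ j * max 0 (- y $ j))"
      unfolding sum_negf[symmetric]
      by (intro sum_mono) (metis weight_nonneg max.cobounded2 mult_left_mono mult_minus_right)
    moreover have "0 \<le> (\<Sum>j\<in>UNIV. W $ j $ i * \<theta> $ j * max 0 (- y $ j))"
      by (intro sum_nonneg) (simp add: weight_nonneg)
    ultimately show ?thesis
      using y[of i] b[of i] by linarith
  qed
  then have neg_part_0: "max 0 (- y $ j) = 0" for j
    using W \<theta> by (intro subinvariant_nonneg_eq_0[where w = "\<lambda>j i. W $ j $ i"
        and t = "\<lambda>j. \<theta> $ j" and u = "\<lambda>i. max 0 (- y $ i)"]) (auto simp: row_stochastic_def)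
  have "0 \<le> y $ j" for j
    using neg_part_0[of j] max.cobounded2[of "- y $ j" 0] by linarith
  then have "0 \<le> (\<Sum>j\<in>UNIV. W $ j $ i * \<theta> $ j * y $ j)"
    by (intro sum_nonneg) (simp add: weight_nonneg)
  then show ?thesis
    using y[of i] b[of i] by linarith
qed

lemma matrix_mul_matrix_inv:
  fixes A :: "'a::field^'n^'n"
  assumes "invertible A"
  shows "A ** matrix_inv A = mat 1"
  using assms unfolding matrix_inv_def invertible_def
  by (rule someI_ex[where P = "\<lambda>B. A ** B = mat 1 \<and> B ** A = mat 1", THEN conjunct1])

lemma equilibrium_eq_scaled_positive_solution:
  fixes x :: "real^'n"
  assumes C: "row_stochastic C" and \<theta>: "\<And>j. 0 \<le> \<theta> $ j" "\<And>j. \<theta> $ j < 1"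
    and eq: "equilibrium C \<theta> x"
  obtains y where "\<And>i. x $ i = (1 - \<theta> $ i) * y $ i" and "\<And>i. 0 < y $ i"
    and "\<And>i. y $ i = 1 / real CARD('n) + (\<Sum>j\<in>UNIV. Wmat C x $ j $ i * \<theta> $ j * y $ j)"
proof -
  define M where "M = mat 1 - transpose (Wmat C x) ** diag_mat \<theta>"
  define y where "y = matrix_inv M *v ((1 / real CARD('n)) *\<^sub>R ones_vec)"
  have W: "row_stochastic (Wmat C x)"
    using C eq by (simp add: row_stochastic_Wmat equilibrium_def)
  have "M *v y = (1 / real CARD('n)) *\<^sub>R ones_vec"
    using invertible_mat_minus_transpose_mult_diag[OF W \<theta>]
    by (simp add: y_def M_def matrix_vector_mul_assoc matrix_mul_matrix_inv)
  then have y_eq: "y $ i = 1 / real CARD('n) + (\<Sum>j\<in>UNIV. Wmat C x $ j $ i * \<theta> $ j * y $ j)" for i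
    using mat_minus_transpose_mult_diag_mult_nth[of "Wmat C x" \<theta> y i]
    by (simp add: M_def ones_vec_def vec_eq_iff)
  have "x = (mat 1 - diag_mat \<theta>) *v y"
    using eq by (simp add: equilibrium_def Fmap_def y_def M_def)
  have "x $ i = (1 - \<theta> $ i) * y $ i" for i
  proof -
    have "x $ i = (\<Sum>j\<in>UNIV. ((if i = j then 1 else 0) - (if i = j then \<theta> $ i else 0)) * y $ j)"
      using \<open>x = _\<close> by (simp add: matrix_vector_mult_def mat_def diag_mat_def)
    also have "\<dots> = (\<Sum>j\<in>UNIV. if j = i then (1 - \<theta> $ i) * y $ j else 0)"
      by (rule sum.cong) auto
    finally show ?thesis
      by simp
  qed
  moreover have "0 < y $ i" for i
    by (rule positive_solution_mat_minus_transpose_mult_diag[OF W \<theta> y_eq]) simp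
  ultimately show ?thesis
    using that y_eq by blast
qed

text \<open>In the \<open>i\<close>-th equation only the terms \<open>j = i\<close> (self-weight \<open>x\<^sub>i\<close>) and \<open>j = l\<close>
  (the only in-neighbour of \<open>i\<close>) survive.\<close>

lemma star_equilibrium_quadratic:
  assumes n2: "CARD('n) \<ge> 2" and C: "row_stochastic C" and star: "star_topology C l"
    and \<theta>: "\<And>j. 0 \<le> \<theta> $ j" "\<And>j. \<theta> $ j < 1" and \<theta>_l: "0 < \<theta> $ l"
    and eq: "equilibrium C \<theta> (x :: real^'n)"
  obtains K where "K > 0" and "\<And>i. 0 < x $ i"
    and "\<And>i. i \<noteq> l \<Longrightarrow>
      x $ i = (1 - \<theta> $ i) * (1 / real CARD('n) + C $ l $ i * K) + \<theta> $ i * (x $ i)\<^sup>2"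
proof -
  obtain y where xy: "\<And>i. x $ i = (1 - \<theta> $ i) * y $ i" and y_pos: "\<And>i. 0 < y $ i"
    and y_eq: "\<And>i. y $ i = 1 / real CARD('n) + (\<Sum>j\<in>UNIV. Wmat C x $ j $ i * \<theta> $ j * y $ j)"
    using equilibrium_eq_scaled_positive_solution[OF C \<theta> eq] by blast
  have x_pos: "0 < x $ i" for i
    using xy y_pos \<theta> by simp
  have "UNIV \<noteq> {l}"
  proof
    assume "UNIV = {l}"
    then have "CARD('n) = card {l}"
      by (rule arg_cong)
    with n2 show False
      by simp
  qed
  then obtain i0 where "i0 \<noteq> l"
    by auto
  then have "x $ l < 1"
    using prob_simplex_pair_sum_le[of x l i0] eq x_pos[of i0] by (simp add: equilibrium_def)
  define K where "K = (1 - x $ l) * \<theta> $ l * y $ l"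
  have "K > 0"
    using \<open>x $ l < 1\<close> \<theta>_l y_pos[of l] by (simp add: K_def)
  moreover have "x $ i = (1 - \<theta> $ i) * (1 / real CARD('n) + C $ l $ i * K) + \<theta> $ i * (x $ i)\<^sup>2"
    if "i \<noteq> l" for i
  proof -
    have "C $ j $ i = 0" if "j \<noteq> l" for j
    proof -
      have "\<not> 0 < C $ j $ i"
        using star \<open>i \<noteq> l\<close> that by (auto simp: star_topology_def)
      then show ?thesis
        using C by (simp add: row_stochastic_def order_antisym not_less)
    qed
    then have "(\<Sum>j\<in>UNIV. Wmat C x $ j $ i * \<theta> $ j * y $ j)
        = (\<Sum>j\<in>UNIV. (if j = i then x $ i * \<theta> $ i * y $ i else 0)
                    + (if j = l then C $ l $ i * K else 0))"
      using \<open>i \<noteq> l\<close> by (intro sum.cong) (auto simp: Wmat_nth K_def algebra_simps)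
    then have "y $ i = 1 / real CARD('n) + x $ i * \<theta> $ i * y $ i + C $ l $ i * K"
      using y_eq[of i] by (simp add: sum.distrib)
    then have "(1 - \<theta> $ i) * y $ i
        = (1 - \<theta> $ i) * (1 / real CARD('n) + x $ i * \<theta> $ i * y $ i + C $ l $ i * K)"
      by (rule arg_cong)
    also have "\<dots> = (1 - \<theta> $ i) * (1 / real CARD('n) + C $ l $ i * K)
        + \<theta> $ i * x $ i * ((1 - \<theta> $ i) * y $ i)"
      by (simp add: algebra_simps)
    finally show ?thesis
      unfolding xy[of i, symmetric] by (simp add: power2_eq_square)
  qed
  ultimately show ?thesis
    using that x_pos by blast
qed

lemma fixed_point_less_target:
  fixes a t s :: real
  assumes "0 < a" "a < 1" "0 < t" "t < 1" "a = (1 - t) * s + t * a\<^sup>2"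
  shows "a < s"
proof -
  have "t * a\<^sup>2 < t * a"
    using assms(1-3) by (simp add: power2_eq_square)
  then have "(1 - t) * a < (1 - t) * s"
    using assms(5) by (simp add: algebra_simps)
  then show ?thesis
    using assms(4) by simp
qed

lemma fixed_points_less_iff_weight_less:
  fixes a b s t u :: real
  assumes "0 < a" "0 < b" "a + b \<le> 1" "0 < s" "a\<^sup>2 < s" "b\<^sup>2 < s"
    and a: "a = (1 - t) * s + t * a\<^sup>2" and b: "b = (1 - u) * s + u * b\<^sup>2"
  shows "b < a \<longleftrightarrow> t < u"
proof -
  have ha: "s - a = t * (s - a\<^sup>2)" and hb: "s - b = u * (s - b\<^sup>2)"
    using a b by (simp_all add: algebra_simps)
  have "(t - u) * ((s - a\<^sup>2) * (s - b\<^sup>2)) = (s - a) * (s - b\<^sup>2) - (s - b) * (s - a\<^sup>2)"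
    unfolding ha hb by (simp add: algebra_simps)
  also have "\<dots> = (b - a) * (s * (1 - a - b) + a * b)"
    by (simp add: algebra_simps power2_eq_square)
  finally have eq: "(t - u) * ((s - a\<^sup>2) * (s - b\<^sup>2)) = (b - a) * (s * (1 - a - b) + a * b)" .
  have "0 < s * (1 - a - b) + a * b"
    using assms(1-4) by (simp add: add_nonneg_pos)
  then have "b < a \<longleftrightarrow> (b - a) * (s * (1 - a - b) + a * b) < 0"
    by (simp add: mult_less_0_iff)
  also have "\<dots> \<longleftrightarrow> (t - u) * ((s - a\<^sup>2) * (s - b\<^sup>2)) < 0"
    using eq by simp
  also have "\<dots> \<longleftrightarrow> t < u"
    using assms(5,6) by (auto simp: mult_less_0_iff)
  finally show ?thesis .
qed

lemma fixed_points_less_iff_target_less: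
  fixes a b s r t :: real
  assumes "0 < a" "0 < b" "a + b \<le> 1" "0 \<le> t" "t < 1"
    and "a = (1 - t) * s + t * a\<^sup>2" "b = (1 - t) * r + t * b\<^sup>2"
  shows "b < a \<longleftrightarrow> r < s"
proof -
  have eq: "(a - b) * (1 - t * (a + b)) = (1 - t) * (s - r)"
    using assms(6,7) by (simp add: algebra_simps power2_eq_square)
  have "t * (a + b) \<le> t"
    using assms(3,4) mult_left_le by blast
  then have "0 < 1 - t * (a + b)"
    using assms(5) by simp
  then have "b < a \<longleftrightarrow> 0 < (a - b) * (1 - t * (a + b))"
    by (simp add: zero_less_mult_iff)
  also have "\<dots> \<longleftrightarrow> r < s"
    using eq assms(5) by (simp add: zero_less_mult_iff)
  finally show ?thesis .
qed

locale quadratic_power_profile =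
  fixes x t s :: "'a \<Rightarrow> real" and l :: 'a
  assumes x_pos: "0 < x i"
    and x_pair_sum_le: "i \<noteq> j \<Longrightarrow> x i + x j \<le> 1"
    and t_nonneg: "0 \<le> t i" and t_less_1: "t i < 1"
    and x_eq: "i \<noteq> l \<Longrightarrow> x i = (1 - t i) * s i + t i * (x i)\<^sup>2"
begin

lemma x_less_1: "i \<noteq> l \<Longrightarrow> x i < 1"
  using x_pair_sum_le[of i l] x_pos[of l] by simp

lemma x_eq_target: "i \<noteq> l \<Longrightarrow> t i = 0 \<Longrightarrow> x i = s i"
  using x_eq[of i] by simp

lemma x_less_target: "i \<noteq> l \<Longrightarrow> 0 < t i \<Longrightarrow> x i < s i"
  using fixed_point_less_target x_pos x_less_1 t_less_1 x_eq by blast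

lemma less_iff_weight_less:
  assumes "i \<noteq> l" "j \<noteq> l" "0 < t i" "0 < t j" "s i = s j"
  shows "x j < x i \<longleftrightarrow> t i < t j"
proof (cases "i = j")
  case False
  have square_less_target: "(x k)\<^sup>2 < s k" if "k \<noteq> l" "0 < t k" for k
  proof -
    have "(x k)\<^sup>2 < x k"
      using x_pos[of k] x_less_1[OF that(1)] by (simp add: power2_eq_square)
    then show ?thesis
      using x_less_target[OF that] by simp
  qed
  show ?thesis
  proof (rule fixed_points_less_iff_weight_less[where s = "s i"])
    show "0 < s i"
      using x_pos[of i] x_less_target[of i] assms by simp
    show "(x j)\<^sup>2 < s i"
      using square_less_target[of j] assms by simp
    show "(x i)\<^sup>2 < s i"
      using square_less_target[of i] assms by simp
    show "x i = (1 - t i) * s i + t i * (x i)\<^sup>2"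
      using x_eq[of i] assms by simp
    show "x j = (1 - t j) * s i + t j * (x j)\<^sup>2"
      using x_eq[of j] assms by simp
  qed (use False x_pos x_pair_sum_le in auto)
qed simp

lemma less_iff_target_less:
  assumes "i \<noteq> l" "j \<noteq> l" "t i = t j"
  shows "x j < x i \<longleftrightarrow> s j < s i"
proof (cases "i = j")
  case False
  then show ?thesis
    using assms x_pos[of i] x_pos[of j] x_pair_sum_le[OF False] t_nonneg[of i] t_less_1[of i]
      x_eq[of i] x_eq[of j] fixed_points_less_iff_target_less[of "x i" "x j" "t i" "s i" "s j"]
    by simp
qed simp

end

theorem corollary3:
  fixes C :: "real^'n^'n" and \<theta> :: "real^'n" and x :: "real^'n" and l :: 'n
  assumes n2: "CARD('n) \<ge> 2"
    and C_rs: "row_stochastic C" and C_zd: "zero_diag C"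
    and theta_range: "\<forall>i. 0 \<le> \<theta> $ i \<and> \<theta> $ i < 1"
    and theta_pos: "\<exists>j. \<theta> $ j > 0"
    and star: "star_topology C l"
    and theta_l: "0 < \<theta> $ l" "\<theta> $ l < 1"
    and eq: "equilibrium C \<theta> x"
  shows "(\<forall>i j. \<theta> $ i = 0 \<and> \<theta> $ j = 0 \<and> C $ l $ i > C $ l $ j \<longrightarrow> x $ i > x $ j)
       \<and> (\<forall>i j. \<theta> $ i = 0 \<and> \<theta> $ j > 0 \<and> j \<noteq> l \<and> C $ l $ i = C $ l $ j \<longrightarrow> x $ i > x $ j)
       \<and> (\<forall>i j. \<theta> $ i > 0 \<and> i \<noteq> l \<and> \<theta> $ j > 0 \<and> j \<noteq> l \<and> C $ l $ i = C $ l $ j \<longrightarrow>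
              (x $ i > x $ j \<longleftrightarrow> \<theta> $ i < \<theta> $ j))
       \<and> (\<forall>i j. \<theta> $ i > 0 \<and> i \<noteq> l \<and> \<theta> $ j > 0 \<and> j \<noteq> l \<and> \<theta> $ i = \<theta> $ j \<longrightarrow>
              (x $ i > x $ j \<longleftrightarrow> C $ l $ i > C $ l $ j))"
proof -
  have \<theta>: "\<And>j. 0 \<le> \<theta> $ j" "\<And>j. \<theta> $ j < 1"
    using theta_range by auto
  obtain K where K: "K > 0" and x_pos: "\<And>i. 0 < x $ i" and x_eq: "\<And>i. i \<noteq> l \<Longrightarrow>
      x $ i = (1 - \<theta> $ i) * (1 / real CARD('n) + C $ l $ i * K) + \<theta> $ i * (x $ i)\<^sup>2"
    using star_equilibrium_quadratic[OF n2 C_rs star \<theta> theta_l(1) eq] by blast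
  interpret quadratic_power_profile "\<lambda>i. x $ i" "\<lambda>i. \<theta> $ i"
      "\<lambda>i. 1 / real CARD('n) + C $ l $ i * K" l
    using x_pos x_eq \<theta> eq prob_simplex_pair_sum_le by unfold_locales (auto simp: equilibrium_def)
  show ?thesis
  proof (intro conjI allI impI)
    fix i j
    assume ij: "\<theta> $ i = 0 \<and> \<theta> $ j = 0 \<and> C $ l $ i > C $ l $ j"
    then have "i \<noteq> l" "j \<noteq> l"
      using theta_l by auto
    then show "x $ i > x $ j"
      using less_iff_target_less[of i j] K ij by simp
  next
    fix i j
    assume "\<theta> $ i = 0 \<and> \<theta> $ j > 0 \<and> j \<noteq> l \<and> C $ l $ i = C $ l $ j"
    then show "x $ i > x $ j"
      using x_eq_target[of i] x_less_target[of j] theta_l by fastforce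
  next
    fix i j
    assume "\<theta> $ i > 0 \<and> i \<noteq> l \<and> \<theta> $ j > 0 \<and> j \<noteq> l \<and> C $ l $ i = C $ l $ j"
    then show "x $ i > x $ j \<longleftrightarrow> \<theta> $ i < \<theta> $ j"
      using less_iff_weight_less[of i j] by simp
  next
    fix i j
    assume "\<theta> $ i > 0 \<and> i \<noteq> l \<and> \<theta> $ j > 0 \<and> j \<noteq> l \<and> \<theta> $ i = \<theta> $ j"
    then show "x $ i > x $ j \<longleftrightarrow> C $ l $ i > C $ l $ j"
      using less_iff_target_less[of i j] K by simp
  qed
qed

end
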